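(* Assume Conditions (A), (P) and (Ah) from the context and let $\tau>0$. With $S_{h,\tau}=(I+\tau A_{h,2})^{-1}(I+\tau A_{h,1})^{-1}(I+\tau^2A_{h,1}A_{h,2})$, for every $n\in\mathbb N$, \[\|S_{h,\tau}^n(I+\tau A_{h,2})^{-1}\|_{\mathcal L(H)}\le1.\]
   Context: $(H,(\cdot,\cdot)_H,\|\cdot\|_H)$ is a real Hilbert space with complexification $H_{\mathbb C}$; $C$ denotes generic constants independent of $h$. Condition (A): $A:\mathrm{dom}(A)\subset H\to H$ and $A_\ell:\mathrm{dom}(A_\ell)\subset H\to H$ ($\ell=1,2$) are linear with $A=A_1+A_2$ on $\mathrm{dom}(A_1)\cap\mathrm{dom}(A_2)\subseteq\mathrm{dom}(A)$; $A$ is densely defined, positive and sectorial: there is $\varphi\in(0,\pi/2)$ such that $0$ and $S_\varphi=\{\lambda\in\mathbb C:\varphi<|\arg\lambda|\le\pi\}$ lie in the resolvent set and $\|(A-\lambda I)^{-1}\|_{\mathcal L(H_{\mathbb C})}\le C/|\lambda|$ on $S_\varphi$; $A_\ell A^{-1}$ is a well-defined bounded operator on $H$. Condition (P): $V_h\subset H$ ($h\in I\subset(0,\infty)$) are finite-dimensional subspaces and $P_h:H\to V_h$ bounded projections with $\|(I-P_h)v\|_H\le Ch^2\|Av\|_H$ for $v\in\mathrm{dom}(A)$. Condition (Ah): $V_h$ carries an inner product with norm $\|\cdot\|_{V_h}$, $\|v_h\|_H\le C\|v_h\|_{V_h}$, and $A_h,A_{h,1},A_{h,2}\in\mathcal L(V_h)$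 satisfy for all $v_h,w_h\in V_h$, $\ell=1,2$: (a) $(A_hv_h,v_h)_H\ge C\|v_h\|^2_{V_h}$; (b) $|(A_hv_h,w_h)_H|\le C\|v_h\|_{V_h}\|w_h\|_{V_h}$; (c) $A_h=A_{h,1}+A_{h,2}$; (d) $(A_{h,\ell}v_h,v_h)_H\ge0$; (e) $\|A_{h,\ell}P_h\|_{\mathcal L(H)}\le Ch^{-2}$; (f) $\|(P_hA_\ell-A_{h,\ell}P_h)v\|_H\le C\|Av\|_H$ for $v\in\mathrm{dom}(A)$; (g) $\|A^{-1}-A_h^{-1}P_h\|_{\mathcal L(H)}\le Ch^2$. Operators on $V_h$ are measured in the operator norm of $(V_h,\|\cdot\|_H)$ (equivalently, composed with $P_h$, as operators on $H$). *)

theory Defs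
  imports "HOL-Analysis.Analysis"
begin

definition lin_op :: "'a::real_vector set \<Rightarrow> ('a \<Rightarrow> 'a) \<Rightarrow> bool" where
  "lin_op D T \<longleftrightarrow> subspace D \<and>
     (\<forall>x\<in>D. \<forall>y\<in>D. T (x + y) = T x + T y) \<and>
     (\<forall>c. \<forall>x\<in>D. T (c *\<^sub>R x) = c *\<^sub>R T x)"

text \<open>Complexification H_C = H + iH with norm sqrt(|x|^2+|y|^2).
  For lambda = a + i b, the operator A - lambda I acts on x + i y in dom(A) + i dom(A) as
  (A x - a x + b y) + i (A y - a y - b x).
  lambda is in the resolvent set with resolvent bound K iff A - lambda I is a bijection
  from dom(A)+i dom(A) onto H_C and the inverse satisfies |(A - lambda I)^{-1}| <= K.\<close>
definition cplx_res_bound ::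
  "'a::real_inner set \<Rightarrow> ('a \<Rightarrow> 'a) \<Rightarrow> complex \<Rightarrow> real \<Rightarrow> bool" where
  "cplx_res_bound D A z K \<longleftrightarrow>
     (\<forall>f g. \<exists>!(x, y). x \<in> D \<and> y \<in> D \<and>
              A x - Re z *\<^sub>R x + Im z *\<^sub>R y = f \<and>
              A y - Re z *\<^sub>R y - Im z *\<^sub>R x = g) \<and>
     (\<forall>f g x y. x \<in> D \<and> y \<in> D \<and>
              A x - Re z *\<^sub>R x + Im z *\<^sub>R y = f \<and>
              A y - Re z *\<^sub>R y - Im z *\<^sub>R x = g \<longrightarrow>
              sqrt ((norm x)\<^sup>2 + (norm y)\<^sup>2) \<le> K * sqrt ((norm f)\<^sup>2 + (norm g)\<^sup>2))"

definition op_inv :: "'a set \<Rightarrow> ('a \<Rightarrow> 'a) \<Rightarrow> 'a \<Rightarrow> 'a" where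
  "op_inv D A = the_inv_into D A"

definition condA ::
  "'a::{real_inner,complete_space} set \<Rightarrow> ('a \<Rightarrow> 'a) \<Rightarrow> 'a set \<Rightarrow> ('a \<Rightarrow> 'a) \<Rightarrow>
   'a set \<Rightarrow> ('a \<Rightarrow> 'a) \<Rightarrow> bool" where
  "condA D A D1 A1 D2 A2 \<longleftrightarrow>
     lin_op D A \<and> lin_op D1 A1 \<and> lin_op D2 A2 \<and>
     D1 \<inter> D2 \<subseteq> D \<and> (\<forall>x\<in>D1 \<inter> D2. A x = A1 x + A2 x) \<and>
     closure D = UNIV \<and>
     (\<forall>x\<in>D. inner (A x) x \<ge> 0) \<and>
     \<comment> \<open>sectoriality\<close>
     (\<exists>\<phi> C. 0 < \<phi> \<and> \<phi> < pi / 2 \<and>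
        cplx_res_bound D A 0 C \<and>
        (\<forall>z. z \<noteq> 0 \<and> \<phi> < \<bar>Arg z\<bar> \<longrightarrow> cplx_res_bound D A z (C / cmod z))) \<and>
     \<comment> \<open>A_l A^{-1} well-defined and bounded on H\<close>
     (\<forall>x. op_inv D A x \<in> D1 \<and> op_inv D A x \<in> D2) \<and>
     bounded_linear (\<lambda>x. A1 (op_inv D A x)) \<and>
     bounded_linear (\<lambda>x. A2 (op_inv D A x))"

definition condP ::
  "real set \<Rightarrow> 'a::{real_inner,complete_space} set \<Rightarrow> ('a \<Rightarrow> 'a) \<Rightarrow>
   (real \<Rightarrow> 'a set) \<Rightarrow> (real \<Rightarrow> 'a \<Rightarrow> 'a) \<Rightarrow> bool" where
  "condP I D A V P \<longleftrightarrow>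
     I \<subseteq> {0<..} \<and>
     (\<forall>h\<in>I. subspace (V h) \<and> (\<exists>B. finite B \<and> span B = V h) \<and>
             bounded_linear (P h) \<and> (\<forall>x. P h x \<in> V h) \<and> (\<forall>v\<in>V h. P h v = v)) \<and>
     (\<exists>C. \<forall>h\<in>I. \<forall>v\<in>D. norm (v - P h v) \<le> C * h\<^sup>2 * norm (A v))"

definition lin_on :: "'a::real_vector set \<Rightarrow> ('a \<Rightarrow> 'a) \<Rightarrow> bool" where
  "lin_on V T \<longleftrightarrow> lin_op V T \<and> (\<forall>v\<in>V. T v \<in> V)"

definition condAh ::
  "real set \<Rightarrow> 'a::{real_inner,complete_space} set \<Rightarrow> ('a \<Rightarrow> 'a) \<Rightarrow>
   'a set \<Rightarrow> ('a \<Rightarrow> 'a) \<Rightarrow> 'a set \<Rightarrow> ('a \<Rightarrow> 'a) \<Rightarrow>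
   (real \<Rightarrow> 'a set) \<Rightarrow> (real \<Rightarrow> 'a \<Rightarrow> 'a) \<Rightarrow> (real \<Rightarrow> 'a \<Rightarrow> 'a \<Rightarrow> real) \<Rightarrow>
   (real \<Rightarrow> 'a \<Rightarrow> 'a) \<Rightarrow> (real \<Rightarrow> 'a \<Rightarrow> 'a) \<Rightarrow> (real \<Rightarrow> 'a \<Rightarrow> 'a) \<Rightarrow> bool" where
  "condAh I D A D1 A1 D2 A2 V P ip Ah Ah1 Ah2 \<longleftrightarrow>
     (\<forall>h\<in>I.
        (\<forall>v\<in>V h. \<forall>w\<in>V h. ip h v w = ip h w v) \<and>
        (\<forall>u\<in>V h. \<forall>v\<in>V h. \<forall>w\<in>V h. ip h (u + v) w = ip h u w + ip h v w) \<and>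
        (\<forall>c. \<forall>v\<in>V h. \<forall>w\<in>V h. ip h (c *\<^sub>R v) w = c * ip h v w) \<and>
        (\<forall>v\<in>V h. v \<noteq> 0 \<longrightarrow> ip h v v > 0) \<and>
        lin_on (V h) (Ah h) \<and> lin_on (V h) (Ah1 h) \<and> lin_on (V h) (Ah2 h)) \<and>
     (\<exists>C. \<forall>h\<in>I. \<forall>v\<in>V h. norm v \<le> C * sqrt (ip h v v)) \<and>
     \<comment> \<open>(a)\<close>
     (\<exists>C>0. \<forall>h\<in>I. \<forall>v\<in>V h. inner (Ah h v) v \<ge> C * ip h v v) \<and>
     \<comment> \<open>(b)\<close>
     (\<exists>C. \<forall>h\<in>I. \<forall>v\<in>V h. \<forall>w\<in>V h.
         \<bar>inner (Ah h v) w\<bar> \<le> C * sqrt (ip h v v) * sqrt (ip h w w)) \<and>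
     \<comment> \<open>(c), (d)\<close>
     (\<forall>h\<in>I. \<forall>v\<in>V h. Ah h v = Ah1 h v + Ah2 h v) \<and>
     (\<forall>h\<in>I. \<forall>v\<in>V h. inner (Ah1 h v) v \<ge> 0 \<and> inner (Ah2 h v) v \<ge> 0) \<and>
     \<comment> \<open>(e)\<close>
     (\<exists>C. \<forall>h\<in>I. \<forall>x. norm (Ah1 h (P h x)) \<le> C / h\<^sup>2 * norm x \<and>
                     norm (Ah2 h (P h x)) \<le> C / h\<^sup>2 * norm x) \<and>
     \<comment> \<open>(f)\<close>
     (\<exists>C. \<forall>h\<in>I. \<forall>v\<in>D. norm (P h (A1 v) - Ah1 h (P h v)) \<le> C * norm (A v) \<and>
                       norm (P h (A2 v) - Ah2 h (P h v)) \<le> C * norm (A v)) \<and>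
     \<comment> \<open>(g)\<close>
     (\<exists>C. \<forall>h\<in>I. \<forall>x. norm (op_inv D A x - op_inv (V h) (Ah h) (P h x)) \<le> C * h\<^sup>2 * norm x)"

definition shifted_inv :: "'a::real_vector set \<Rightarrow> real \<Rightarrow> ('a \<Rightarrow> 'a) \<Rightarrow> 'a \<Rightarrow> 'a" where
  "shifted_inv V \<tau> T = the_inv_into V (\<lambda>v. v + \<tau> *\<^sub>R T v)"

definition S_op :: "'a::real_vector set \<Rightarrow> real \<Rightarrow> ('a \<Rightarrow> 'a) \<Rightarrow> ('a \<Rightarrow> 'a) \<Rightarrow> 'a \<Rightarrow> 'a" where
  "S_op V \<tau> T1 T2 v =
     shifted_inv V \<tau> T2 (shifted_inv V \<tau> T1 (v + \<tau>\<^sup>2 *\<^sub>R T1 (T2 v)))"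

end

theory Submission
  imports Defs
begin

text \<open>
  Let \<open>R\<^sub>i = (I + \<tau> A\<^sub>h\<^sub>,\<^sub>i)\<^sup>-\<^sup>1\<close> and let \<open>C\<^sub>i = 2 R\<^sub>i - I\<close> be the Cayley transform.
  Monotonicity gives \<open>inner u (\<tau> A\<^sub>h\<^sub>,\<^sub>i u) \<ge> 0\<close>, so both \<open>norm u\<close> and
  \<open>norm (u - \<tau> A\<^sub>h\<^sub>,\<^sub>i u)\<close> are at most \<open>norm (u + \<tau> A\<^sub>h\<^sub>,\<^sub>i u)\<close>: \<open>R\<^sub>i\<close> and \<open>C\<^sub>i\<close> are
  contractions. A direct computation shows \<open>S\<^sub>h\<^sub>,\<^sub>\<tau> R\<^sub>2 = R\<^sub>2 G\<close> for the Douglas--Rachford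
  operator \<open>G = (I + C\<^sub>1 C\<^sub>2) / 2\<close>, so \<open>S\<^sub>h\<^sub>,\<^sub>\<tau>\<^sup>n R\<^sub>2 = R\<^sub>2 G\<^sup>n\<close> is a product of
  contractions. Only the finite dimension of \<open>V\<^sub>h\<close> (which makes \<open>I + \<tau> A\<^sub>h\<^sub>,\<^sub>i\<close> onto) and
  condition (Ah)(d) are used.
\<close>

lemma lin_op_zero: "lin_op V f \<Longrightarrow> f 0 = 0"
  unfolding lin_op_def by (metis scaleR_zero_left subspace_0)

lemma lin_op_diff:
  assumes "lin_op V f" "x \<in> V" "y \<in> V"
  shows "f (x - y) = f x - f y"
proof -
  have "f (x + (-1) *\<^sub>R y) = f x + (-1) *\<^sub>R f y"
    using assms unfolding lin_op_def by (metis subspace_scale)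
  then show ?thesis by simp
qed

lemma lin_op_linear_extension:
  assumes "lin_op V f"
  obtains g where "linear g" "\<And>x. x \<in> V \<Longrightarrow> g x = f x"
proof -
  obtain B where B: "B \<subseteq> V" "independent B" "V \<subseteq> span B"
    using basis_exists[of V] by metis
  obtain g where g: "linear g" "\<forall>x\<in>B. g x = f x"
    using linear_independent_extend[OF B(2)] by metis
  have "subspace {x \<in> V. g x = f x}"
    unfolding subspace_def
  proof (intro conjI ballI allI)
    show "0 \<in> {x \<in> V. g x = f x}"
      using lin_op_zero[OF assms] linear_0[OF g(1)] subspace_0 assms
      unfolding lin_op_def by auto
  next
    fix x y assume "x \<in> {x \<in> V. g x = f x}" "y \<in> {x \<in> V. g x = f x}"
    then show "x + y \<in> {x \<in> V. g x = f x}"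
      using assms linear_add[OF g(1)] subspace_add unfolding lin_op_def by auto
  next
    fix c x assume "x \<in> {x \<in> V. g x = f x}"
    then show "c *\<^sub>R x \<in> {x \<in> V. g x = f x}"
      using assms linear_scale[OF g(1)] subspace_scale unfolding lin_op_def by auto
  qed
  then have "span B \<subseteq> {x \<in> V. g x = f x}"
    using B(1) g(2) by (intro span_minimal) auto
  then show thesis
    using that g(1) B(3) by blast
qed

lemma span_eq_if_independent_card_ge:
  assumes fin: "finite B" and C: "independent C" "C \<subseteq> span B" and card_le: "card B \<le> card C"
  shows "span C = span B"
proof
  show "span C \<subseteq> span B"
    using C(2) by (simp add: span_minimal)
  have finC: "finite C"
    using independent_span_bound[OF fin C] ..
  show "span B \<subseteq> span C"
  proof
    fix x assume x: "x \<in> span B"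
    show "x \<in> span C"
    proof (rule ccontr)
      assume x_notin: "x \<notin> span C"
      then have "independent (insert x C)"
        using C(1) by (rule independent_insertI)
      then have "card (insert x C) \<le> card B"
        using independent_span_bound[OF fin] x C(2) by blast
      moreover have "card (insert x C) = Suc (card C)"
        using finC x_notin span_base by (metis card_insert_disjoint)
      ultimately show False
        using card_le by simp
    qed
  qed
qed

lemma linear_inj_on_imp_surj_on:
  assumes "linear g" and fin: "finite B\<^sub>0" "span B\<^sub>0 = V"
    and into: "g ` V \<subseteq> V" and inj: "inj_on g V"
  shows "g ` V = V"
proof -
  obtain B where B: "B \<subseteq> V" "independent B" "V \<subseteq> span B"
    using basis_exists[of V] by metis
  have span_B: "span B = V"
    using B fin(2) by (metis span_minimal subspace_span subset_antisym)
  have finB: "finite B"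
    using independent_span_bound[OF fin(1) B(2)] B(1) fin(2) by blast
  have "independent (g ` B)"
    using linear_independent_injective_image[OF \<open>linear g\<close> B(2)] inj span_B by simp
  moreover have "card (g ` B) = card B"
    using card_image inj_on_subset[OF inj B(1)] by blast
  moreover have "g ` B \<subseteq> span B"
    using B(1) into span_B by blast
  ultimately have "span (g ` B) = span B"
    using span_eq_if_independent_card_ge[OF finB] by simp
  then show ?thesis
    using linear_span_image[OF \<open>linear g\<close>] span_B by simp
qed

lemma lin_op_inj_on_imp_surj_on:
  assumes fin: "finite B\<^sub>0" "span B\<^sub>0 = V" and "lin_op V f"
    and "f ` V \<subseteq> V" and "inj_on f V"
  shows "f ` V = V"
proof -
  obtain g where g: "linear g" "\<And>x. x \<in> V \<Longrightarrow> g x = f x"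
    using lin_op_linear_extension[OF \<open>lin_op V f\<close>] by metis
  then have "g ` V = f ` V" and "inj_on g V"
    using \<open>inj_on f V\<close> by (auto simp: inj_on_def)
  with linear_inj_on_imp_surj_on[OF g(1) fin] assms show ?thesis
    by simp
qed

lemma norm_le_norm_add_if_inner_nonneg:
  fixes a b :: "'a::real_inner"
  shows "0 \<le> inner a b \<Longrightarrow> norm a \<le> norm (a + b)"
  by (simp add: norm_le inner_add inner_commute)

lemma norm_diff_le_norm_add_if_inner_nonneg:
  fixes a b :: "'a::real_inner"
  shows "0 \<le> inner a b \<Longrightarrow> norm (a - b) \<le> norm (a + b)"
  by (simp add: norm_le inner_add inner_diff inner_commute)

definition cayley :: "'a::real_vector set \<Rightarrow> real \<Rightarrow> ('a \<Rightarrow> 'a) \<Rightarrow> 'a \<Rightarrow> 'a" where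
  "cayley V \<tau> T w = 2 *\<^sub>R shifted_inv V \<tau> T w - w"

definition douglas_rachford ::
  "'a::real_vector set \<Rightarrow> real \<Rightarrow> ('a \<Rightarrow> 'a) \<Rightarrow> ('a \<Rightarrow> 'a) \<Rightarrow> 'a \<Rightarrow> 'a" where
  "douglas_rachford V \<tau> T1 T2 w = (1 / 2) *\<^sub>R (w + cayley V \<tau> T1 (cayley V \<tau> T2 w))"

locale monotone_op_finite_dim =
  fixes V :: "'a::real_inner set" and \<tau> :: real and T :: "'a \<Rightarrow> 'a"
  assumes finite_dim: "\<exists>B. finite B \<and> span B = V"
    and lin: "lin_on V T"
    and monotone: "\<And>v. v \<in> V \<Longrightarrow> 0 \<le> inner (T v) v"
    and step_nonneg: "0 \<le> \<tau>"
begin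

lemma subspace: "subspace V"
  using finite_dim subspace_span by blast

lemma T_in: "v \<in> V \<Longrightarrow> T v \<in> V"
  using lin unfolding lin_on_def by blast

lemma T_add: "v \<in> V \<Longrightarrow> w \<in> V \<Longrightarrow> T (v + w) = T v + T w"
  and T_scale: "v \<in> V \<Longrightarrow> T (c *\<^sub>R v) = c *\<^sub>R T v"
  using lin unfolding lin_on_def lin_op_def by blast+

lemma shift_dominates:
  assumes "u \<in> V"
  shows "norm u \<le> norm (u + \<tau> *\<^sub>R T u)"
    and "norm (u - \<tau> *\<^sub>R T u) \<le> norm (u + \<tau> *\<^sub>R T u)"
proof -
  have "0 \<le> inner u (\<tau> *\<^sub>R T u)"
    using monotone[OF assms] step_nonneg by (simp add: inner_commute)
  then show "norm u \<le> norm (u + \<tau> *\<^sub>R T u)"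
    and "norm (u - \<tau> *\<^sub>R T u) \<le> norm (u + \<tau> *\<^sub>R T u)"
    by (simp_all add: norm_le_norm_add_if_inner_nonneg norm_diff_le_norm_add_if_inner_nonneg)
qed

lemma inj_on_shift: "inj_on (\<lambda>v. v + \<tau> *\<^sub>R T v) V"
proof (rule inj_onI)
  fix x y assume xy: "x \<in> V" "y \<in> V" "x + \<tau> *\<^sub>R T x = y + \<tau> *\<^sub>R T y"
  have "x - y \<in> V"
    using xy subspace subspace_diff by blast
  moreover have "T (x - y) = T x - T y"
    using xy lin_op_diff lin unfolding lin_on_def by blast
  then have "(x - y) + \<tau> *\<^sub>R T (x - y) = (x + \<tau> *\<^sub>R T x) - (y + \<tau> *\<^sub>R T y)"
    by (simp add: scaleR_diff_right)
  then have "(x - y) + \<tau> *\<^sub>R T (x - y) = 0"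
    using xy(3) by simp
  ultimately have "norm (x - y) \<le> 0"
    using shift_dominates(1) by fastforce
  then show "x = y" by simp
qed

lemma shift_image: "(\<lambda>v. v + \<tau> *\<^sub>R T v) ` V = V"
proof -
  obtain B where B: "finite B" "span B = V"
    using finite_dim by blast
  have lin_shift: "lin_op V (\<lambda>v. v + \<tau> *\<^sub>R T v)"
    unfolding lin_op_def
  proof (intro conjI ballI allI subspace)
    fix v w assume "v \<in> V" "w \<in> V"
    then show "v + w + \<tau> *\<^sub>R T (v + w) = (v + \<tau> *\<^sub>R T v) + (w + \<tau> *\<^sub>R T w)"
      by (simp add: T_add scaleR_add_right)
  next
    fix c v assume "v \<in> V"
    then show "c *\<^sub>R v + \<tau> *\<^sub>R T (c *\<^sub>R v) = c *\<^sub>R (v + \<tau> *\<^sub>R T v)"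
      by (simp add: T_scale scaleR_add_right)
  qed
  have shift_into: "(\<lambda>v. v + \<tau> *\<^sub>R T v) ` V \<subseteq> V"
  proof (rule image_subsetI)
    fix v assume "v \<in> V"
    then show "v + \<tau> *\<^sub>R T v \<in> V"
      using T_in subspace by (simp add: subspace_add subspace_scale)
  qed
  show ?thesis
    by (rule lin_op_inj_on_imp_surj_on[OF B lin_shift shift_into inj_on_shift])
qed

lemma shifted_inv_shift: "u \<in> V \<Longrightarrow> shifted_inv V \<tau> T (u + \<tau> *\<^sub>R T u) = u"
  unfolding shifted_inv_def using the_inv_into_f_f[OF inj_on_shift] by blast

lemma shifted_inv_in: "w \<in> V \<Longrightarrow> shifted_inv V \<tau> T w \<in> V"
  unfolding shifted_inv_def using the_inv_into_into[OF inj_on_shift] shift_image by blast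

lemma shift_shifted_inv:
  "w \<in> V \<Longrightarrow> shifted_inv V \<tau> T w + \<tau> *\<^sub>R T (shifted_inv V \<tau> T w) = w"
  unfolding shifted_inv_def using f_the_inv_into_f[OF inj_on_shift] shift_image by blast

lemma norm_shifted_inv_le: "w \<in> V \<Longrightarrow> norm (shifted_inv V \<tau> T w) \<le> norm w"
  using shift_dominates(1)[OF shifted_inv_in] shift_shifted_inv by metis

lemma cayley_eq:
  "w \<in> V \<Longrightarrow> cayley V \<tau> T w = shifted_inv V \<tau> T w - \<tau> *\<^sub>R T (shifted_inv V \<tau> T w)"
  unfolding cayley_def using shift_shifted_inv[of w] by (simp add: algebra_simps scaleR_2)

lemma cayley_in: "w \<in> V \<Longrightarrow> cayley V \<tau> T w \<in> V"
  unfolding cayley_def using shifted_inv_in subspace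
  by (simp add: subspace_diff subspace_scale)

lemma norm_cayley_le: "w \<in> V \<Longrightarrow> norm (cayley V \<tau> T w) \<le> norm w"
  using shift_dominates(2)[OF shifted_inv_in] shift_shifted_inv cayley_eq by metis

end

locale monotone_splitting_finite_dim =
  op1: monotone_op_finite_dim V \<tau> T1 + op2: monotone_op_finite_dim V \<tau> T2
  for V :: "'a::real_inner set" and \<tau> T1 T2
begin

lemma douglas_rachford_in: "w \<in> V \<Longrightarrow> douglas_rachford V \<tau> T1 T2 w \<in> V"
  unfolding douglas_rachford_def
  using op1.cayley_in op2.cayley_in op1.subspace by (simp add: subspace_add subspace_scale)

lemma norm_douglas_rachford_le:
  assumes w: "w \<in> V"
  shows "norm (douglas_rachford V \<tau> T1 T2 w) \<le> norm w"
proof -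
  have "norm (cayley V \<tau> T1 (cayley V \<tau> T2 w)) \<le> norm w"
    using op1.norm_cayley_le[OF op2.cayley_in[OF w]] op2.norm_cayley_le[OF w] by (rule order_trans)
  then have "norm (w + cayley V \<tau> T1 (cayley V \<tau> T2 w)) \<le> 2 * norm w"
    using norm_triangle_ineq[of w "cayley V \<tau> T1 (cayley V \<tau> T2 w)"] by simp
  then show ?thesis
    unfolding douglas_rachford_def by simp
qed

lemma S_op_shifted_inv:
  assumes w: "w \<in> V"
  shows "S_op V \<tau> T1 T2 (shifted_inv V \<tau> T2 w)
           = shifted_inv V \<tau> T2 (douglas_rachford V \<tau> T1 T2 w)"
proof -
  define u where "u = shifted_inv V \<tau> T2 w"
  define z where "z = shifted_inv V \<tau> T1 (cayley V \<tau> T2 w)"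
  have u: "u \<in> V" "T2 u \<in> V"
    unfolding u_def using w op2.shifted_inv_in op2.T_in by blast+
  have z: "z \<in> V" "z + \<tau> *\<^sub>R T1 z = u - \<tau> *\<^sub>R T2 u"
    unfolding z_def u_def
    using op2.cayley_in[OF w] op1.shifted_inv_in op1.shift_shifted_inv op2.cayley_eq[OF w]
    by simp_all
  define y where "y = \<tau> *\<^sub>R T2 u + z"
  have y: "y \<in> V"
    unfolding y_def using u z(1) op1.subspace by (simp add: subspace_add subspace_scale)
  have cayley_cayley: "cayley V \<tau> T1 (cayley V \<tau> T2 w) = z - \<tau> *\<^sub>R T1 z"
    unfolding z_def by (rule op1.cayley_eq[OF op2.cayley_in[OF w]])
  have "w = (z + \<tau> *\<^sub>R T1 z) + \<tau> *\<^sub>R T2 u + \<tau> *\<^sub>R T2 u"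
    unfolding z(2) using op2.shift_shifted_inv[OF w] by (simp add: u_def)
  then have "w + cayley V \<tau> T1 (cayley V \<tau> T2 w) = y + y"
    unfolding cayley_cayley y_def by (simp add: algebra_simps)
  then have douglas_rachford_eq: "douglas_rachford V \<tau> T1 T2 w = y"
    unfolding douglas_rachford_def by (simp only: scaleR_half_double)
  have "T1 y = \<tau> *\<^sub>R T1 (T2 u) + T1 z"
    unfolding y_def using u z(1) op1.T_add op1.T_scale op1.subspace by (simp add: subspace_scale)
  then have "y + \<tau> *\<^sub>R T1 y = u + \<tau>\<^sup>2 *\<^sub>R T1 (T2 u)"
    unfolding y_def using z(2) by (simp add: algebra_simps power2_eq_square)
  then have "shifted_inv V \<tau> T1 (u + \<tau>\<^sup>2 *\<^sub>R T1 (T2 u)) = y"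
    using op1.shifted_inv_shift[OF y] by simp
  then show ?thesis
    unfolding S_op_def u_def[symmetric] douglas_rachford_eq by simp
qed

lemma funpow_douglas_rachford_in: "w \<in> V \<Longrightarrow> (douglas_rachford V \<tau> T1 T2 ^^ n) w \<in> V"
  by (induction n) (simp_all add: douglas_rachford_in)

lemma norm_funpow_douglas_rachford_le:
  "w \<in> V \<Longrightarrow> norm ((douglas_rachford V \<tau> T1 T2 ^^ n) w) \<le> norm w"
proof (induction n)
  case (Suc n)
  then show ?case
    using norm_douglas_rachford_le[OF funpow_douglas_rachford_in] by (auto intro: order_trans)
qed simp

lemma funpow_S_op_shifted_inv:
  "w \<in> V \<Longrightarrow> (S_op V \<tau> T1 T2 ^^ n) (shifted_inv V \<tau> T2 w)
             = shifted_inv V \<tau> T2 ((douglas_rachford V \<tau> T1 T2 ^^ n) w)"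
  by (induction n) (simp_all add: S_op_shifted_inv funpow_douglas_rachford_in)

lemma norm_funpow_S_op_shifted_inv_le:
  "w \<in> V \<Longrightarrow> norm ((S_op V \<tau> T1 T2 ^^ n) (shifted_inv V \<tau> T2 w)) \<le> norm w"
  unfolding funpow_S_op_shifted_inv
  using op2.norm_shifted_inv_le[OF funpow_douglas_rachford_in] norm_funpow_douglas_rachford_le
  by (rule order_trans)

end

theorem lemma4p2:
  fixes D D1 D2 :: "'a::{real_inner,complete_space} set"
    and A A1 A2 :: "'a \<Rightarrow> 'a"
    and I :: "real set" and V :: "real \<Rightarrow> 'a set" and P :: "real \<Rightarrow> 'a \<Rightarrow> 'a"
    and ip :: "real \<Rightarrow> 'a \<Rightarrow> 'a \<Rightarrow> real"
    and Ah Ah1 Ah2 :: "real \<Rightarrow> 'a \<Rightarrow> 'a"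
    and h \<tau> :: real and n :: nat
  assumes "condA D A D1 A1 D2 A2"
    and "condP I D A V P"
    and "condAh I D A D1 A1 D2 A2 V P ip Ah Ah1 Ah2"
    and "h \<in> I" and "\<tau> > 0"
  shows "\<forall>v\<in>V h. norm ((S_op (V h) \<tau> (Ah1 h) (Ah2 h) ^^ n) (shifted_inv (V h) \<tau> (Ah2 h) v))
                   \<le> norm v"
proof -
  interpret monotone_splitting_finite_dim "V h" \<tau> "Ah1 h" "Ah2 h"
    using assms(2-5) unfolding condP_def condAh_def
    by unfold_locales auto
  show ?thesis
    using norm_funpow_S_op_shifted_inv_le by blast
qed

end
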